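(* For every weight function $w$, every $n\ge1$ and every $1\le i\le n$, $$\xi_i(0)=\max_{-1<z_1<\dots<z_{i-1}<1}\ \min_{\substack{p\in S\\ p(z_1)=\dots=p(z_{i-1})=0}}\frac{\int_{-1}^1 t\,p(t)w(t)\,dt}{\int_{-1}^1 p(t)w(t)\,dt},$$ where $S$ is the set of all nonzero polynomials $p$ of degree at most $2n-2$ with $p\ge0$ on $[-1,1]$.
   Context: A weight function is a non-negative integrable function $w$ on $[-1,1]$ with nonzero integral. $\xi_1(0)<\dots<\xi_n(0)$ denote the zeros of the orthonormal polynomial of degree $n$ with respect to $w(t)\,dt$ on $[-1,1]$. *)

theory Defs
  imports "HOL-Analysis.Analysis" "HOL-Computational_Algebra.Polynomial"
begin

definition weight_function :: "(real \<Rightarrow> real) \<Rightarrow> bool" where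
  "weight_function w \<longleftrightarrow> (\<forall>t\<in>{-1..1}. 0 \<le> w t) \<and> w integrable_on {-1..1}
     \<and> integral {-1..1} w \<noteq> 0"

definition is_orthonormal_poly :: "(real \<Rightarrow> real) \<Rightarrow> nat \<Rightarrow> real poly \<Rightarrow> bool" where
  "is_orthonormal_poly w n P \<longleftrightarrow> degree P = n \<and> lead_coeff P > 0
     \<and> (\<forall>q::real poly. degree q < n \<longrightarrow> integral {-1..1} (\<lambda>t. poly P t * poly q t * w t) = 0)
     \<and> integral {-1..1} (\<lambda>t. (poly P t)^2 * w t) = 1"

definition orth_poly :: "(real \<Rightarrow> real) \<Rightarrow> nat \<Rightarrow> real poly" where
  "orth_poly w n = (THE P. is_orthonormal_poly w n P)"

definition xi :: "(real \<Rightarrow> real) \<Rightarrow> nat \<Rightarrow> nat \<Rightarrow> real" where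
  "xi w n i = sorted_list_of_set {x. poly (orth_poly w n) x = 0} ! (i - 1)"

definition S_polys :: "nat \<Rightarrow> real poly set" where
  "S_polys n = {p. p \<noteq> 0 \<and> degree p \<le> 2 * n - 2 \<and> (\<forall>t\<in>{-1..1}. poly p t \<ge> 0)}"

definition ratio :: "(real \<Rightarrow> real) \<Rightarrow> real poly \<Rightarrow> real" where
  "ratio w p = integral {-1..1} (\<lambda>t. t * poly p t * w t) / integral {-1..1} (\<lambda>t. poly p t * w t)"

definition admissible_nodes :: "nat \<Rightarrow> real list set" where
  "admissible_nodes i = {zs. length zs = i - 1 \<and> sorted_wrt (<) zs \<and> set zs \<subseteq> {-1<..<1}}"

definition ratio_values :: "(real \<Rightarrow> real) \<Rightarrow> nat \<Rightarrow> real list \<Rightarrow> real set" where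
  "ratio_values w n zs = ratio w ` {p \<in> S_polys n. \<forall>z\<in>set zs. poly p z = 0}"

definition is_min :: "real set \<Rightarrow> real \<Rightarrow> bool" where
  "is_min A m \<longleftrightarrow> m \<in> A \<and> (\<forall>x\<in>A. m \<le> x)"

definition is_max :: "real set \<Rightarrow> real \<Rightarrow> bool" where
  "is_max A m \<longleftrightarrow> m \<in> A \<and> (\<forall>x\<in>A. x \<le> m)"

end

theory Submission
  imports Defs
begin

text \<open>
  The zeros xi_1 < ... < xi_n of the orthonormal polynomial P_n are simple and lie in (-1,1),
  and Gauss quadrature, integral f w = sum_k lambda_k f(xi_k) with positive Christoffel numbers
  lambda_k, is exact for deg f < 2n. Hence for p >= 0 of degree at most 2n - 2,
  integral (t - xi_i) p w = sum_k lambda_k (xi_k - xi_i) p(xi_k), which is >= 0 if p vanishes at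
  xi_1, ..., xi_(i-1) and <= 0 if p vanishes at xi_(i+1), ..., xi_n; the square of the i-th
  Lagrange basis polynomial gives equality.
  For arbitrary nodes z_1, ..., z_(i-1), every admissible p is divisible by
  q = prod_j (t - z_j)^2, so the inner minimum is the case i = 1 for the weight q w and is
  therefore attained. Testing with q prod_(k>i) (t - xi_k)^2 shows that it is at most xi_i,
  and the nodes z = (xi_1, ..., xi_(i-1)) attain xi_i.
\<close>

section \<open>Polynomials that are nonnegative on [-1,1]\<close>

lemma order_linear_factor: "order y [:-a, 1:] = (if y = a then 1 else (0::nat))"
  for a y :: real
proof (cases "y = a")
  case True
  then show ?thesis using order_power_n_n[of a 1] by simp
qed (auto intro: order_0I)

lemma order_prod_linear_factors:
  fixes y :: real
  assumes "finite A"
  shows "order y (\<Prod>x\<in>A. [:-x, 1:]) = (if y \<in> A then 1 else 0)"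
  using assms
proof (induction A rule: finite_induct)
  case empty
  then show ?case by (auto intro: order_0I)
next
  case (insert a A)
  have "(\<Prod>x\<in>A. [:-x, 1:]) \<noteq> (0::real poly)" "[:-a, 1:] \<noteq> (0::real poly)"
    using insert.hyps(1) by auto
  then have nonzero: "[:-a, 1:] * (\<Prod>x\<in>A. [:-x, 1:]) \<noteq> 0"
    by (metis mult_eq_0_iff)
  show ?case
    unfolding prod.insert[OF insert.hyps] order_mult[OF nonzero] order_linear_factor insert.IH
    using insert.hyps by auto
qed

lemma even_orders_imp_constant_sign:
  fixes f :: "real poly"
  assumes "f \<noteq> 0" "\<And>y. y \<in> {-1<..<1} \<Longrightarrow> even (order y f)"
  shows "(\<forall>x\<in>{-1..1}. 0 \<le> poly f x) \<or> (\<forall>x\<in>{-1..1}. poly f x \<le> 0)"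
  using assms
proof (induction "degree f" arbitrary: f rule: less_induct)
  case less
  show ?case
  proof (cases "\<exists>a\<in>{-1<..<1}. poly f a = 0")
    case True
    then obtain a where a: "a \<in> {-1<..<1}" "poly f a = 0" by blast
    have "order a f \<noteq> 0" using a less.prems(1) order_root by blast
    with less.prems(2)[OF a(1)] have "2 \<le> order a f" by presburger
    hence "[:-a, 1:]^2 dvd f" using order_1[of a f] le_imp_power_dvd dvd_trans by blast
    then obtain g where g: "f = [:-a, 1:]^2 * g" by (elim dvdE)
    have g0: "g \<noteq> 0" using g less.prems(1) by auto
    have dg: "degree f = 2 + degree g" using g g0 by (simp add: degree_mult_eq degree_power_eq)
    have "even (order y g)" if "y \<in> {-1<..<1}" for y
    proof -
      have "order y f = order y ([:-a, 1:]^2) + order y g" using g less.prems(1) order_mult by metis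
      moreover have "order y ([:-a, 1:]^2) = (if y = a then 2 else 0)"
        using order_power_n_n[of a 2] by (auto intro: order_0I)
      ultimately show ?thesis using less.prems(2)[OF that] by (auto split: if_splits)
    qed
    then have "(\<forall>x\<in>{-1..1}. 0 \<le> poly g x) \<or> (\<forall>x\<in>{-1..1}. poly g x \<le> 0)"
      using less.hyps[of g] dg g0 by auto
    then show ?thesis unfolding g by (auto simp: mult_nonneg_nonneg mult_nonneg_nonpos)
  next
    case False
    show ?thesis
    proof (rule ccontr)
      assume "\<not> ?thesis"
      then obtain x0 x1 where x: "x0 \<in> {-1..1}" "x1 \<in> {-1..1}" "poly f x0 < 0" "0 < poly f x1"
        by (auto simp: not_le)
      have "x0 \<noteq> x1" using x by auto
      then have "x0 < x1 \<or> x1 < x0" by linarith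
      then obtain y where "x0 < y \<and> y < x1 \<or> x1 < y \<and> y < x0" "poly f y = 0"
        using poly_IVT_pos[of x0 x1 f] poly_IVT_neg[of x1 x0 f] x by blast
      with x False show False by auto
    qed
  qed
qed

text \<open>A zero in the interior of a nonnegativity interval is a local minimum, so the
  derivative, which at \<open>a\<close> equals the cofactor of \<open>t - a\<close>, vanishes there as well.\<close>

lemma nonneg_poly_interior_root:
  fixes g :: "real poly"
  assumes nonneg: "\<forall>t\<in>{-1..1}. 0 \<le> poly g t" and a: "a \<in> {-1<..<1}" and root: "poly g a = 0"
  shows "\<exists>s. g = [:-a, 1:]^2 * s \<and> (\<forall>t\<in>{-1..1}. 0 \<le> poly s t)"
proof -
  obtain h where h: "g = [:-a, 1:] * h"
    using root poly_eq_0_iff_dvd by (metis dvdE)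
  have "poly (pderiv g) a = 0"
  proof (rule DERIV_local_min)
    show "DERIV (poly g) a :> poly (pderiv g) a" by (rule poly_DERIV)
    show "0 < min (a + 1) (1 - a)" using a by simp
    show "\<forall>y. \<bar>a - y\<bar> < min (a + 1) (1 - a) \<longrightarrow> poly g a \<le> poly g y"
      using nonneg root by (force simp: abs_less_iff)
  qed
  moreover have "poly (pderiv g) a = poly h a"
    unfolding h pderiv_mult by (simp add: pderiv_pCons)
  ultimately obtain s where s: "h = [:-a, 1:] * s"
    using poly_eq_0_iff_dvd by (metis dvdE)
  have g: "g = [:-a, 1:]^2 * s"
    unfolding h s power2_eq_square by (simp only: mult.assoc)
  have s_nonneg: "0 \<le> poly s t" if "t \<in> {-1..1}" "t \<noteq> a" for t
  proof -
    have "poly g t = (t - a)^2 * poly s t"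
      unfolding g by (simp add: power2_eq_square algebra_simps)
    then have "0 \<le> (t - a)^2 * poly s t"
      using nonneg that(1) by metis
    moreover have "0 < (t - a)^2" using that by simp
    ultimately show ?thesis by (simp add: zero_le_mult_iff)
  qed
  have "0 \<le> poly s a"
  proof (rule tendsto_lowerbound)
    show "(poly s \<longlongrightarrow> poly s a) (at_right a)" by (intro tendsto_intros)
    have "\<forall>\<^sub>F t in at_right a. t \<in> {a<..<1}"
      using a by (intro eventually_at_right_real) simp
    then show "\<forall>\<^sub>F t in at_right a. 0 \<le> poly s t"
      by eventually_elim (use s_nonneg a in auto)
  qed simp
  with s_nonneg g show ?thesis by metis
qed

definition root_square_poly :: "real set \<Rightarrow> real poly" where
  "root_square_poly Z = (\<Prod>z\<in>Z. [:-z, 1:]^2)"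

lemma root_square_poly_nonneg: "0 \<le> poly (root_square_poly Z) t"
  unfolding root_square_poly_def by (simp add: poly_prod prod_nonneg)

lemma root_square_poly_root: "finite Z \<Longrightarrow> z \<in> Z \<Longrightarrow> poly (root_square_poly Z) z = 0"
  unfolding root_square_poly_def by (auto simp: poly_prod prod_zero_iff)

lemma root_square_poly_nonzero: "finite Z \<Longrightarrow> root_square_poly Z \<noteq> 0"
  unfolding root_square_poly_def by auto

lemma degree_root_square_poly: "finite Z \<Longrightarrow> degree (root_square_poly Z) = 2 * card Z"
  unfolding root_square_poly_def by (subst degree_prod_sum_eq) (auto simp: degree_power_eq)

lemma nonneg_poly_factor_root_square_poly:
  fixes p :: "real poly"
  assumes "finite Z" "Z \<subseteq> {-1<..<1}" "\<forall>t\<in>{-1..1}. 0 \<le> poly p t" "\<forall>z\<in>Z. poly p z = 0"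
  shows "\<exists>s. p = root_square_poly Z * s \<and> (\<forall>t\<in>{-1..1}. 0 \<le> poly s t)"
  using assms
proof (induction Z rule: finite_induct)
  case empty
  then show ?case by (auto simp: root_square_poly_def)
next
  case (insert a A)
  then obtain s where s: "p = root_square_poly A * s" "\<forall>t\<in>{-1..1}. 0 \<le> poly s t" by auto
  have "poly (root_square_poly A) a \<noteq> 0"
    using insert(1,2) by (auto simp: root_square_poly_def poly_prod prod_zero_iff)
  moreover have "poly p a = 0" using insert by auto
  ultimately have "poly s a = 0" unfolding s by simp
  then obtain s' where s': "s = [:-a, 1:]^2 * s'" "\<forall>t\<in>{-1..1}. 0 \<le> poly s' t"
    using nonneg_poly_interior_root[of s a] s(2) insert(4) by auto
  have "p = root_square_poly (insert a A) * s'"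
    unfolding s(1) s'(1) root_square_poly_def using insert(1,2) by (simp add: mult_ac)
  with s'(2) show ?case by blast
qed

lemma root_square_poly_mult_in_S_polys:
  assumes "finite Z" "s \<noteq> 0" "\<forall>t\<in>{-1..1}. 0 \<le> poly s t" "2 * card Z + degree s \<le> 2 * n - 2"
  shows "root_square_poly Z * s \<in> S_polys n"
  using assms root_square_poly_nonzero[OF assms(1)] root_square_poly_nonneg[of Z]
  by (auto simp: S_polys_def degree_mult_eq degree_root_square_poly)

section \<open>Orthogonal polynomials\<close>

locale weight =
  fixes w :: "real \<Rightarrow> real"
  assumes weight_function: "weight_function w"
begin

definition pint :: "real poly \<Rightarrow> real" where
  "pint f = integral {-1..1} (\<lambda>t. poly f t * w t)"

lemma weight_nonneg: "t \<in> {-1..1} \<Longrightarrow> 0 \<le> w t"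
  using weight_function by (auto simp: weight_function_def)

lemma absolutely_integrable_poly_weight:
  "(\<lambda>t. poly f t * w t) absolutely_integrable_on {-1..1}"
proof (rule absolutely_integrable_bounded_measurable_product_real)
  show "poly f \<in> borel_measurable (lebesgue_on {-1..1})"
    by (intro continuous_imp_measurable_on_sets_lebesgue) (auto intro: continuous_intros)
  show "bounded (poly f ` {-1..1})"
    by (intro compact_imp_bounded compact_continuous_image) (auto intro: continuous_intros)
  show "w absolutely_integrable_on {-1..1}"
    using nonnegative_absolutely_integrable_1 weight_function weight_nonneg
    unfolding weight_function_def by blast
qed simp

lemma integrable_poly_weight: "(\<lambda>t. poly f t * w t) integrable_on {-1..1}"
  using absolutely_integrable_poly_weight absolutely_integrable_on_def by blast

lemma pint_nonneg: "(\<And>t. t \<in> {-1..1} \<Longrightarrow> 0 \<le> poly f t) \<Longrightarrow> 0 \<le> pint f"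
  unfolding pint_def
  by (intro integral_nonneg integrable_poly_weight) (auto intro!: mult_nonneg_nonneg weight_nonneg)

text \<open>If the integral vanished, \<open>w\<close> would vanish almost everywhere off the finitely many
  zeros of \<open>f\<close>, contradicting \<open>integral {-1..1} w \<noteq> 0\<close>.\<close>

lemma pint_pos:
  assumes "f \<noteq> 0" "\<And>t. t \<in> {-1..1} \<Longrightarrow> 0 \<le> poly f t"
  shows "0 < pint f"
proof (rule ccontr)
  assume "\<not> 0 < pint f"
  with pint_nonneg[OF assms(2)] have "pint f = 0" by simp
  define g where "g = (\<lambda>t. indicator {-1..1} t *\<^sub>R (poly f t * w t))"
  have int: "integrable lebesgue g"
    using absolutely_integrable_poly_weight unfolding g_def by (simp add: set_integrable_def)
  have "integral\<^sup>L lebesgue g = 0"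
    using set_lebesgue_integral_eq_integral(2)[OF absolutely_integrable_poly_weight] \<open>pint f = 0\<close>
    unfolding g_def pint_def by (simp add: set_lebesgue_integral_def)
  moreover have "AE t in lebesgue. 0 \<le> g t"
    using assms(2) weight_nonneg by (auto simp: g_def indicator_def)
  ultimately have "AE t in lebesgue. g t = 0"
    using integral_nonneg_eq_0_iff_AE[OF int] by blast
  then obtain N where N: "{t \<in> space lebesgue. g t \<noteq> 0} \<subseteq> N"
      "emeasure lebesgue N = 0" "N \<in> sets lebesgue"
    by (rule AE_E)
  have "negligible N"
    using N(2,3) by (simp add: negligible_iff_null_sets null_sets_def)
  then have "negligible (N \<union> {t. poly f t = 0})"
    using poly_roots_finite[OF assms(1)] by (simp add: negligible_finite)
  moreover have "w t = 0" if "t \<in> {-1..1} - (N \<union> {t. poly f t = 0})" for t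
    using that N(1) unfolding g_def by (auto simp: subset_iff indicator_def)
  ultimately have "integral {-1..1} w = 0"
    using integral_spike[of "N \<union> {t. poly f t = 0}" "{-1..1}" "\<lambda>_. 0" w] by simp
  with weight_function show False by (simp add: weight_function_def)
qed

lemma pint_square_pos: "f \<noteq> 0 \<Longrightarrow> 0 < pint (f * f)"
  by (rule pint_pos) auto

lemma pint_zero [simp]: "pint 0 = 0"
  by (simp add: pint_def)

lemma pint_add: "pint (f + g) = pint f + pint g"
  unfolding pint_def
  using integral_add[OF integrable_poly_weight integrable_poly_weight] by (simp add: distrib_right)

lemma pint_smult: "pint (smult a f) = a * pint f"
  unfolding pint_def using integral_mult[OF integrable_poly_weight] by (simp add: mult.assoc)

lemma pint_diff: "pint (f - g) = pint f - pint g"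
  unfolding pint_def
  using integral_diff[OF integrable_poly_weight integrable_poly_weight] by (simp add: left_diff_distrib)

lemma pint_uminus: "pint (- f) = - pint f"
  using pint_diff[of 0 f] by simp

lemma pint_sum: "finite A \<Longrightarrow> pint (sum F A) = (\<Sum>k\<in>A. pint (F k))"
  by (induction A rule: finite_induct) (auto simp: pint_add)

lemma weight_poly_mult:
  assumes "q \<noteq> 0" "\<forall>t\<in>{-1..1}. 0 \<le> poly q t"
  shows "weight (\<lambda>t. poly q t * w t)"
  using integrable_poly_weight[of q] pint_pos[of q] assms weight_nonneg
  unfolding weight_def weight_function_def pint_def by auto

lemma ratio_eq_pint: "ratio w p = pint ([:0, 1:] * p) / pint p"
  unfolding ratio_def pint_def by (simp add: mult.assoc)

definition orth_below :: "nat \<Rightarrow> real poly \<Rightarrow> bool" where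
  "orth_below k P \<longleftrightarrow> (\<forall>q. degree q < k \<longrightarrow> pint (P * q) = 0)"

lemma orth_below_smult: "orth_below k P \<Longrightarrow> orth_below k (smult c P)"
  unfolding orth_below_def by (simp add: pint_smult)

lemma orth_below_if_orth_to_monic_basis:
  assumes Q: "\<And>j. j < k \<Longrightarrow> degree (Q j) = j \<and> lead_coeff (Q j) = 1"
    and orth: "\<And>j. j < k \<Longrightarrow> pint (P * Q j) = 0"
  shows "orth_below k P"
proof -
  have "degree q < m \<Longrightarrow> pint (P * q) = 0" if "m \<le> k" for m q
    using that
  proof (induction m arbitrary: q)
    case (Suc m)
    define r where "r = q - smult (coeff q m) (Q m)"
    have Qm: "degree (Q m) = m" "lead_coeff (Q m) = 1" using Q[of m] Suc.prems(2) by auto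
    have "degree r \<le> m" unfolding r_def using Suc.prems(1) Qm
      by (intro degree_diff_le) auto
    moreover have "coeff r m = 0" unfolding r_def using Qm by simp
    ultimately have "r = 0 \<or> degree r < m"
      by (metis leading_coeff_0_iff le_neq_implies_less)
    then have "pint (P * r) = 0" using Suc by auto
    moreover have "P * q = P * r + smult (coeff q m) (P * Q m)"
      unfolding r_def by (simp add: algebra_simps)
    ultimately show ?case using orth Suc.prems(2) by (simp add: pint_add pint_smult)
  qed simp
  then show ?thesis unfolding orth_below_def by blast
qed

text \<open>Gram--Schmidt: subtract from x^k its projections onto monic orthogonal
  polynomials of lower degree.\<close>

lemma monic_orth_below_exists: "\<exists>P. degree P = k \<and> lead_coeff P = 1 \<and> orth_below k P"
proof (induction k rule: less_induct)
  case (less k)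
  define Q where "Q = (\<lambda>j. SOME P. degree P = j \<and> lead_coeff P = 1 \<and> orth_below j P)"
  have Q: "degree (Q j) = j \<and> lead_coeff (Q j) = 1 \<and> orth_below j (Q j)" if "j < k" for j
    unfolding Q_def by (rule someI_ex) (use less that in blast)
  have QQ: "pint (Q j * Q i) = 0" if "i < k" "j < k" "i \<noteq> j" for i j
    using Q[OF that(1)] Q[OF that(2)] that(3) unfolding orth_below_def
    by (metis linorder_neqE_nat mult.commute)
  define P where "P = monom 1 k - (\<Sum>j<k. smult (pint (monom 1 k * Q j) / pint (Q j * Q j)) (Q j))"
  have PQ: "pint (P * Q i) = 0" if "i < k" for i
  proof -
    have "pint (P * Q i) = pint (monom 1 k * Q i)
        - (\<Sum>j<k. pint (monom 1 k * Q j) / pint (Q j * Q j) * pint (Q j * Q i))"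
      unfolding P_def by (simp add: left_diff_distrib sum_distrib_right pint_diff pint_sum pint_smult)
    also have "(\<Sum>j<k. pint (monom 1 k * Q j) / pint (Q j * Q j) * pint (Q j * Q i))
        = pint (monom 1 k * Q i) / pint (Q i * Q i) * pint (Q i * Q i)"
      by (subst sum.remove[of _ i]) (use that QQ in auto)
    also have "\<dots> = pint (monom 1 k * Q i)"
    proof -
      have "Q i \<noteq> 0" using Q[OF that] by (metis leading_coeff_0_iff one_neq_zero)
      then show ?thesis using pint_square_pos[of "Q i"] by simp
    qed
    finally show ?thesis by simp
  qed
  have "orth_below k P"
    by (rule orth_below_if_orth_to_monic_basis[of k Q]) (use Q PQ in blast)+
  moreover have "degree P = k \<and> lead_coeff P = 1"
  proof -
    have "degree (\<Sum>j<k. smult (pint (monom 1 k * Q j) / pint (Q j * Q j)) (Q j)) < k \<or> k = 0"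
      using Q by (auto intro!: degree_sum_less le_less_trans[OF degree_smult_le])
    then have "degree P \<le> k" "coeff P k = 1"
      unfolding P_def by (auto intro!: degree_diff_le simp: degree_monom_eq coeff_eq_0)
    then show ?thesis by (metis le_antisym le_degree zero_neq_one)
  qed
  ultimately show ?case by blast
qed

lemma is_orthonormal_poly_iff:
  "is_orthonormal_poly w n P \<longleftrightarrow>
     degree P = n \<and> lead_coeff P > 0 \<and> orth_below n P \<and> pint (P * P) = 1"
  unfolding is_orthonormal_poly_def orth_below_def pint_def by (simp add: power2_eq_square)

lemma orthonormal_poly_unique:
  assumes "is_orthonormal_poly w n P1" "is_orthonormal_poly w n P2"
  shows "P1 = P2"
proof -
  note P = assms[unfolded is_orthonormal_poly_iff]
  define R where "R = smult (lead_coeff P2) P1 - smult (lead_coeff P1) P2"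
  have "R = 0"
  proof (rule ccontr)
    assume "R \<noteq> 0"
    have "degree R \<le> n" unfolding R_def using P by (intro degree_diff_le) auto
    moreover have "coeff R n = 0" unfolding R_def using P by (auto simp: algebra_simps)
    ultimately have "degree R < n" using \<open>R \<noteq> 0\<close>
      by (metis leading_coeff_0_iff le_neq_implies_less)
    then have "pint (P1 * R) = 0" "pint (P2 * R) = 0"
      using P unfolding orth_below_def by auto
    moreover have "pint (R * R) = lead_coeff P2 * pint (P1 * R) - lead_coeff P1 * pint (P2 * R)"
      unfolding R_def by (simp add: left_diff_distrib pint_diff pint_smult)
    ultimately show False using pint_square_pos[OF \<open>R \<noteq> 0\<close>] by simp
  qed
  define d where "d = lead_coeff P1 / lead_coeff P2"
  have "0 < d" unfolding d_def using P by (metis divide_pos_pos)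
  have "smult (1 / lead_coeff P2) (smult (lead_coeff P2) P1)
      = smult (1 / lead_coeff P2) (smult (lead_coeff P1) P2)"
    using \<open>R = 0\<close> unfolding R_def by simp
  then have P1: "P1 = smult d P2"
    using P unfolding d_def by (simp add: smult_smult split: if_splits)
  have "1 = pint (P1 * P1)" using P by simp
  also have "\<dots> = d^2" using P by (simp add: P1 pint_smult power2_eq_square)
  finally have "d = 1" using \<open>0 < d\<close> by (simp add: power2_eq_1_iff)
  then show ?thesis using P1 by simp
qed

lemma ex1_orthonormal_poly: "\<exists>!P. is_orthonormal_poly w n P"
proof (rule ex_ex1I)
  obtain P where P: "degree P = n" "lead_coeff P = 1" "orth_below n P"
    using monic_orth_below_exists by blast
  define c where "c = 1 / sqrt (pint (P * P))"
  have pos: "0 < pint (P * P)" using P by (intro pint_square_pos) auto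
  have "pint (smult c P * smult c P) = c * (c * pint (P * P))"
    by (simp only: mult_smult_left mult_smult_right pint_smult)
  also have "\<dots> = 1" unfolding c_def using pos by (simp add: field_simps)
  finally show "\<exists>P. is_orthonormal_poly w n P"
    unfolding is_orthonormal_poly_iff using P pos
    by (intro exI[of _ "smult c P"]) (auto simp: c_def orth_below_smult)
qed (rule orthonormal_poly_unique)

lemma
  shows degree_orth_poly: "degree (orth_poly w n) = n"
    and orth_below_orth_poly: "orth_below n (orth_poly w n)"
    and orth_poly_nonzero: "orth_poly w n \<noteq> 0"
  using theI'[OF ex1_orthonormal_poly[of n]] unfolding orth_poly_def is_orthonormal_poly_iff
  by auto

text \<open>At least \<open>n\<close> zeros in \<open>(-1,1)\<close> have odd order: otherwise the orthogonal polynomial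
  times the product of the linear factors at those zeros would have constant sign on
  \<open>[-1,1]\<close> and vanishing integral.\<close>

lemma
  shows orth_poly_roots_interior: "{x. poly (orth_poly w n) x = 0} \<subseteq> {-1<..<1}"
    and card_orth_poly_roots: "card {x. poly (orth_poly w n) x = 0} = n"
proof -
  define P where "P = orth_poly w n"
  define R where "R = {x. poly P x = 0}"
  define Y where "Y = {y\<in>{-1<..<1}. odd (order y P)}"
  have P0: "P \<noteq> 0" unfolding P_def by (rule orth_poly_nonzero)
  have finR: "finite R" unfolding R_def using poly_roots_finite[OF P0] .
  have YR: "Y \<subseteq> R" unfolding Y_def R_def using order_root by fastforce
  have finY: "finite Y" using finite_subset[OF YR finR] .
  have cR: "card R \<le> n"
    unfolding R_def using card_poly_roots_bound[OF P0] degree_orth_poly P_def by simp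
  have cY: "n \<le> card Y"
  proof (rule ccontr)
    assume "\<not> n \<le> card Y"
    define q where "q = (\<Prod>y\<in>Y. [:-y, 1:])"
    have "degree q = card Y" unfolding q_def by (subst degree_prod_sum_eq) auto
    then have orth: "pint (P * q) = 0"
      using orth_below_orth_poly \<open>\<not> n \<le> card Y\<close> unfolding orth_below_def P_def by simp
    have Pq0: "P * q \<noteq> 0" using P0 finY unfolding q_def by auto
    have "even (order y (P * q))" if "y \<in> {-1<..<1}" for y
    proof -
      have "order y (P * q) = order y P + (if y \<in> Y then 1 else 0)"
        using order_mult[OF Pq0] order_prod_linear_factors[OF finY] unfolding q_def by simp
      then show ?thesis using that unfolding Y_def by auto
    qed
    from even_orders_imp_constant_sign[OF Pq0 this] show False
    proof
      assume "\<forall>x\<in>{-1..1}. 0 \<le> poly (P * q) x"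
      then show False using pint_pos[OF Pq0] orth by auto
    next
      assume "\<forall>x\<in>{-1..1}. poly (P * q) x \<le> 0"
      then have "0 < pint (- (P * q))" using Pq0 by (intro pint_pos) auto
      then show False using orth pint_uminus by simp
    qed
  qed
  have "Y = R"
    using card_subset_eq[OF finR YR] card_mono[OF finR YR] cR cY by linarith
  show "{x. poly (orth_poly w n) x = 0} \<subseteq> {-1<..<1}"
    using \<open>Y = R\<close> unfolding Y_def R_def P_def by blast
  show "card {x. poly (orth_poly w n) x = 0} = n"
    using \<open>Y = R\<close> cR cY unfolding R_def P_def by simp
qed

text \<open>Zeros are indexed from 0: \<open>node n (i - 1)\<close> is xi_i.\<close>

definition zeros :: "nat \<Rightarrow> real list" where
  "zeros n = sorted_list_of_set {x. poly (orth_poly w n) x = 0}"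

abbreviation node :: "nat \<Rightarrow> nat \<Rightarrow> real" where
  "node n k \<equiv> zeros n ! k"

lemma xi_eq_node: "xi w n i = node n (i - 1)"
  unfolding xi_def zeros_def ..

lemma
  shows length_zeros: "length (zeros n) = n"
    and sorted_zeros: "sorted_wrt (<) (zeros n)"
    and set_zeros: "set (zeros n) = {x. poly (orth_poly w n) x = 0}"
  using card_orth_poly_roots poly_roots_finite[OF orth_poly_nonzero]
  unfolding zeros_def by auto

lemma poly_orth_poly_node: "k < n \<Longrightarrow> poly (orth_poly w n) (node n k) = 0"
  using set_zeros nth_mem[of k "zeros n"] length_zeros by auto

lemma node_interior: "k < n \<Longrightarrow> node n k \<in> {-1<..<1}"
  using poly_orth_poly_node[of k n] orth_poly_roots_interior[of n] by blast

lemma node_less: "k < j \<Longrightarrow> j < n \<Longrightarrow> node n k < node n j"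
  using sorted_wrt_nth_less[OF sorted_zeros] length_zeros by simp

lemma node_le: "k \<le> j \<Longrightarrow> j < n \<Longrightarrow> node n k \<le> node n j"
  using node_less[of k j n] by (cases "k = j") auto

lemma node_inj: "k < n \<Longrightarrow> j < n \<Longrightarrow> node n k = node n j \<Longrightarrow> k = j"
  using node_less by (metis less_irrefl linorder_neqE_nat)

lemma take_zeros_admissible:
  assumes "c < n"
  shows "take c (zeros n) \<in> admissible_nodes (Suc c)"
proof -
  have "set (take c (zeros n)) \<subseteq> {-1<..<1}"
    using set_take_subset[of c "zeros n"] orth_poly_roots_interior[of n] set_zeros[of n] by blast
  then show ?thesis
    unfolding admissible_nodes_def using assms length_zeros sorted_zeros
    by (simp add: sorted_wrt_take)
qed

lemma set_take_zeros: "c < n \<Longrightarrow> set (take c (zeros n)) = node n ` {..<c}"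
  using length_zeros by (force simp: in_set_conv_nth)

section \<open>Gauss quadrature\<close>

definition lagrange :: "nat \<Rightarrow> nat \<Rightarrow> real poly" where
  "lagrange n k = (\<Prod>j\<in>{..<n}-{k}. [:-node n j, 1:])"

lemma degree_lagrange: "k < n \<Longrightarrow> degree (lagrange n k) = n - 1"
  unfolding lagrange_def by (subst degree_prod_sum_eq) auto

lemma poly_lagrange_other_node: "j < n \<Longrightarrow> j \<noteq> k \<Longrightarrow> poly (lagrange n k) (node n j) = 0"
  unfolding lagrange_def poly_prod by (rule prod_zero) auto

lemma poly_lagrange_own_node: "k < n \<Longrightarrow> poly (lagrange n k) (node n k) \<noteq> 0"
  unfolding lagrange_def poly_prod using node_inj[of k n] by (auto simp: prod_zero_iff)

lemma lagrange_nonzero: "k < n \<Longrightarrow> lagrange n k \<noteq> 0"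
  using poly_lagrange_own_node[of k n] by auto

lemma lagrange_interpolation:
  assumes "degree r < n"
  shows "r = (\<Sum>k<n. smult (poly r (node n k) / poly (lagrange n k) (node n k)) (lagrange n k))"
    (is "r = ?L")
proof (rule poly_eqI_degree)
  have card: "card (node n ` {..<n}) = n"
    by (subst card_image) (auto intro: inj_onI node_inj)
  then show "degree r < card (node n ` {..<n})" using assms by simp
  have "degree ?L \<le> n - 1"
    by (rule degree_sum_le) (auto intro: order_trans[OF degree_smult_le] simp: degree_lagrange)
  then show "degree ?L < card (node n ` {..<n})"
    using card assms by linarith
  fix x assume "x \<in> node n ` {..<n}"
  then obtain j where j: "j < n" "x = node n j" by auto
  have "poly ?L x = (\<Sum>k\<in>{j}. poly r (node n k) / poly (lagrange n k) (node n k) * poly (lagrange n k) x)"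
    unfolding poly_sum poly_smult
    by (rule sum.mono_neutral_right) (use j poly_lagrange_other_node in auto)
  also have "\<dots> = poly r x" using j poly_lagrange_own_node[of j n] by simp
  finally show "poly r x = poly ?L x" by simp
qed

definition christoffel :: "nat \<Rightarrow> nat \<Rightarrow> real" where
  "christoffel n k = pint (lagrange n k) / poly (lagrange n k) (node n k)"

text \<open>Write f = q P_n + r; orthogonality kills q P_n, and r agrees with f at the zeros of P_n
  and is its own Lagrange interpolant there.\<close>

lemma gauss_quadrature:
  assumes "1 \<le> n" "degree f < 2 * n"
  shows "pint f = (\<Sum>k<n. christoffel n k * poly f (node n k))"
proof -
  define P where "P = orth_poly w n"
  have P0: "P \<noteq> 0" and dP: "degree P = n"
    unfolding P_def by (simp_all add: orth_poly_nonzero degree_orth_poly)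
  define q where "q = f div P"
  define r where "r = f mod P"
  have fqr: "f = q * P + r" unfolding q_def r_def by simp
  have dr: "degree r < n"
    using degree_mod_less[OF P0, of f] dP assms(1) unfolding r_def by auto
  have "degree q < n"
  proof (cases "q = 0")
    case False
    have "degree (q * P) \<le> max (degree f) (degree r)"
      using fqr by (metis add_diff_cancel_right' degree_diff_le_max)
    then show ?thesis using False P0 dP assms dr by (simp add: degree_mult_eq)
  qed (use assms in simp)
  then have "pint (q * P) = 0"
    using orth_below_orth_poly unfolding orth_below_def P_def by (simp add: mult.commute)
  then have "pint f = pint r" using fqr by (simp add: pint_add)
  also have "\<dots> = (\<Sum>k<n. poly r (node n k) / poly (lagrange n k) (node n k) * pint (lagrange n k))"
    by (subst lagrange_interpolation[OF dr]) (simp add: pint_sum pint_smult)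
  also have "\<dots> = (\<Sum>k<n. christoffel n k * poly f (node n k))"
    using poly_orth_poly_node unfolding christoffel_def fqr P_def by (simp add: mult_ac)
  finally show ?thesis .
qed

lemma christoffel_pos:
  assumes "1 \<le> n" "c < n"
  shows "0 < christoffel n c"
proof -
  have d: "degree (lagrange n c * lagrange n c) < 2 * n"
    using degree_lagrange[OF assms(2)] assms(1) degree_mult_le[of "lagrange n c" "lagrange n c"]
    by simp
  have "pint (lagrange n c * lagrange n c)
      = (\<Sum>k\<in>{c}. christoffel n k * poly (lagrange n c * lagrange n c) (node n k))"
    unfolding gauss_quadrature[OF assms(1) d]
    by (rule sum.mono_neutral_right) (use assms poly_lagrange_other_node in auto)
  then have "pint (lagrange n c * lagrange n c) = christoffel n c * (poly (lagrange n c) (node n c))^2"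
    by (simp add: power2_eq_square)
  moreover have "0 < pint (lagrange n c * lagrange n c)"
    using pint_square_pos lagrange_nonzero assms(2) by blast
  ultimately show ?thesis by (simp add: zero_less_mult_iff)
qed

lemma pint_shifted_gauss:
  assumes "1 \<le> n" "degree f < 2 * n - 1"
  shows "pint ([:-node n c, 1:] * f)
    = (\<Sum>k<n. christoffel n k * ((node n k - node n c) * poly f (node n k)))"
proof -
  have "degree ([:-node n c, 1:] * f) < 2 * n"
    using degree_mult_le[of "[:-node n c, 1:]" f] assms(2) by simp
  then show ?thesis by (simp add: gauss_quadrature[OF assms(1)] algebra_simps)
qed

lemma pint_x_mult: "pint ([:0, 1:] * f) = pint ([:-a, 1:] * f) + a * pint f"
proof -
  have eq: "[:0, 1:] * f = [:-a, 1:] * f + smult a f"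
    by (rule poly_eqI) (simp add: algebra_simps)
  show ?thesis unfolding eq pint_add pint_smult ..
qed

lemma node_mult_pint_le:
  assumes "1 \<le> n" "c < n" "degree f < 2 * n - 1" "\<forall>k<n. 0 \<le> poly f (node n k)"
    and "\<forall>k<c. poly f (node n k) = 0"
  shows "node n c * pint f \<le> pint ([:0, 1:] * f)"
proof -
  have "0 \<le> pint ([:-node n c, 1:] * f)"
    unfolding pint_shifted_gauss[OF assms(1,3)]
  proof (rule sum_nonneg)
    fix k assume k: "k \<in> {..<n}"
    show "0 \<le> christoffel n k * ((node n k - node n c) * poly f (node n k))"
    proof (cases "k < c")
      case False
      then have "0 \<le> (node n k - node n c) * poly f (node n k)"
        using node_le[of c k n] assms(4) k by (intro mult_nonneg_nonneg) auto
      then show ?thesis using christoffel_pos[OF assms(1), of k] k by simp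
    qed (use assms(5) in auto)
  qed
  then show ?thesis using pint_x_mult[of f "node n c"] by linarith
qed

lemma pint_le_node_mult:
  assumes "1 \<le> n" "c < n" "degree f < 2 * n - 1" "\<forall>k<n. 0 \<le> poly f (node n k)"
    and "\<forall>k<n. c < k \<longrightarrow> poly f (node n k) = 0"
  shows "pint ([:0, 1:] * f) \<le> node n c * pint f"
proof -
  have "pint ([:-node n c, 1:] * f) \<le> 0"
    unfolding pint_shifted_gauss[OF assms(1,3)]
  proof (rule sum_nonpos)
    fix k assume k: "k \<in> {..<n}"
    show "christoffel n k * ((node n k - node n c) * poly f (node n k)) \<le> 0"
    proof (cases "c < k")
      case False
      then have "(node n k - node n c) * poly f (node n k) \<le> 0"
        using node_le[of k c n] assms(2,4) k by (intro mult_nonpos_nonneg) auto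
      then show ?thesis using christoffel_pos[OF assms(1), of k] k by (simp add: mult_nonneg_nonpos)
    qed (use assms(5) k in auto)
  qed
  then show ?thesis using pint_x_mult[of f "node n c"] by linarith
qed

end

section \<open>The max-min characterization\<close>

lemma ratio_poly_mult_weight: "ratio (\<lambda>t. poly q t * w t) s = ratio w (q * s)"
  unfolding ratio_def by (simp add: mult_ac)

lemma admissible_nodes_set:
  assumes "zs \<in> admissible_nodes (Suc c)"
  shows "card (set zs) = c" "set zs \<subseteq> {-1<..<1}"
  using assms distinct_card[of zs] unfolding admissible_nodes_def by (auto simp: strict_sorted_iff)

lemma is_min_image: "x \<in> A \<Longrightarrow> \<forall>y\<in>A. f x \<le> f y \<Longrightarrow> is_min (f ` A) (f x)"
  unfolding is_min_def by auto

lemma Inf_eq_is_min: "is_min A m \<Longrightarrow> Inf A = m"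
  unfolding is_min_def by (intro cInf_eq_minimum) auto

context weight
begin

lemma S_polys_pint_pos: "p \<in> S_polys n \<Longrightarrow> 0 < pint p"
  unfolding S_polys_def by (auto intro: pint_pos)

lemma S_polys_nonneg_node: "p \<in> S_polys m \<Longrightarrow> k < n \<Longrightarrow> 0 \<le> poly p (node n k)"
  using node_interior[of k n] unfolding S_polys_def by auto

lemma node_le_ratio:
  assumes "1 \<le> n" "c < n" "p \<in> S_polys n" "\<forall>k<c. poly p (node n k) = 0"
  shows "node n c \<le> ratio w p"
proof -
  have "node n c * pint p \<le> pint ([:0, 1:] * p)"
    using assms S_polys_nonneg_node by (intro node_mult_pint_le) (auto simp: S_polys_def)
  then show ?thesis
    unfolding ratio_eq_pint using S_polys_pint_pos[OF assms(3)] by (simp add: pos_le_divide_eq)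
qed

lemma ratio_le_node:
  assumes "1 \<le> n" "c < n" "p \<in> S_polys n" "\<forall>k<n. c < k \<longrightarrow> poly p (node n k) = 0"
  shows "ratio w p \<le> node n c"
proof -
  have "pint ([:0, 1:] * p) \<le> node n c * pint p"
    using assms S_polys_nonneg_node by (intro pint_le_node_mult) (auto simp: S_polys_def)
  then show ?thesis
    unfolding ratio_eq_pint using S_polys_pint_pos[OF assms(3)] by (simp add: pos_divide_le_eq)
qed

lemma lagrange_square_in_S_polys: "1 \<le> n \<Longrightarrow> c < n \<Longrightarrow> lagrange n c * lagrange n c \<in> S_polys n"
  using lagrange_nonzero degree_lagrange by (auto simp: S_polys_def degree_mult_eq)

lemma ratio_lagrange_square:
  assumes "1 \<le> n" "c < n"
  shows "ratio w (lagrange n c * lagrange n c) = node n c"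
proof (rule antisym)
  show "ratio w (lagrange n c * lagrange n c) \<le> node n c"
    using assms poly_lagrange_other_node[of _ n c]
    by (intro ratio_le_node lagrange_square_in_S_polys) auto
  show "node n c \<le> ratio w (lagrange n c * lagrange n c)"
    using assms poly_lagrange_other_node[of _ n c]
    by (intro node_le_ratio lagrange_square_in_S_polys) auto
qed

lemma ratio_values_has_min:
  assumes "c < n" "zs \<in> admissible_nodes (Suc c)"
  shows "\<exists>m. is_min (ratio_values w n zs) m"
proof -
  define Z where "Z = set zs"
  define q where "q = root_square_poly Z"
  have Z: "finite Z" "card Z = c" "Z \<subseteq> {-1<..<1}"
    using admissible_nodes_set[OF assms(2)] unfolding Z_def by auto
  have q: "q \<noteq> 0" "\<forall>t\<in>{-1..1}. 0 \<le> poly q t"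
    unfolding q_def using root_square_poly_nonzero[OF Z(1)] root_square_poly_nonneg by auto
  interpret V: weight "\<lambda>t. poly q t * w t"
    by (rule weight_poly_mult[OF q])
  define l where "l = V.lagrange (n - c) 0"
  have "l * l \<in> S_polys (n - c)"
    unfolding l_def using assms(1) by (intro V.lagrange_square_in_S_polys) auto
  then have "q * (l * l) \<in> S_polys n"
    unfolding q_def using Z assms(1)
    by (intro root_square_poly_mult_in_S_polys) (auto simp: S_polys_def)
  then have "q * (l * l) \<in> {p \<in> S_polys n. \<forall>z\<in>set zs. poly p z = 0}"
    using root_square_poly_root[OF Z(1)] unfolding q_def Z_def by auto
  moreover have "ratio w (q * (l * l)) \<le> ratio w p"
    if p: "p \<in> {p \<in> S_polys n. \<forall>z\<in>set zs. poly p z = 0}" for p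
  proof -
    obtain s where s: "p = q * s" "\<forall>t\<in>{-1..1}. 0 \<le> poly s t"
      using nonneg_poly_factor_root_square_poly[OF Z(1,3), of p] p
      unfolding q_def Z_def S_polys_def by auto
    have "degree p = 2 * c + degree s" "s \<noteq> 0"
      using p s q Z by (auto simp: S_polys_def degree_mult_eq degree_root_square_poly q_def)
    then have "s \<in> S_polys (n - c)"
      using p s(2) assms(1) by (auto simp: S_polys_def)
    then have "V.node (n - c) 0 \<le> ratio w p"
      using V.node_le_ratio[of "n - c" 0 s] assms(1) s(1) by (simp add: ratio_poly_mult_weight)
    moreover have "ratio w (q * (l * l)) = V.node (n - c) 0"
      using V.ratio_lagrange_square[of "n - c" 0] assms(1) unfolding l_def
      by (simp add: ratio_poly_mult_weight)
    ultimately show ?thesis by simp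
  qed
  ultimately show ?thesis
    unfolding ratio_values_def by (blast intro: is_min_image)
qed

lemma Inf_ratio_values_le_node:
  assumes "c < n" "zs \<in> admissible_nodes (Suc c)"
  shows "Inf (ratio_values w n zs) \<le> node n c"
proof -
  obtain m where m: "is_min (ratio_values w n zs) m"
    using ratio_values_has_min[OF assms] by blast
  define Z where "Z = set zs"
  have Z: "finite Z" "card Z = c"
    using admissible_nodes_set[OF assms(2)] unfolding Z_def by auto
  define p where "p = root_square_poly Z * root_square_poly (node n ` {c<..<n})"
  have "inj_on (node n) {c<..<n}"
    by (rule inj_onI) (use node_inj in auto)
  then have "card (node n ` {c<..<n}) = n - Suc c"
    by (simp add: card_image)
  then have "p \<in> S_polys n"
    unfolding p_def using Z assms(1) root_square_poly_nonneg
    by (intro root_square_poly_mult_in_S_polys root_square_poly_nonzero)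
      (auto simp: degree_root_square_poly)
  moreover have "\<forall>z\<in>set zs. poly p z = 0"
    using root_square_poly_root[OF Z(1)] unfolding p_def Z_def by auto
  ultimately have "m \<le> ratio w p"
    using m unfolding is_min_def ratio_values_def by auto
  also have "ratio w p \<le> node n c"
    using \<open>p \<in> S_polys n\<close> assms(1)
    by (intro ratio_le_node) (auto simp: p_def root_square_poly_root)
  finally show ?thesis using Inf_eq_is_min[OF m] by simp
qed

lemma Inf_ratio_values_take_zeros:
  assumes "c < n"
  shows "Inf (ratio_values w n (take c (zeros n))) = node n c"
proof -
  let ?l = "lagrange n c * lagrange n c"
  have "is_min (ratio_values w n (take c (zeros n))) (ratio w ?l)"
    unfolding ratio_values_def
  proof (rule is_min_image)
    show "?l \<in> {p \<in> S_polys n. \<forall>z\<in>set (take c (zeros n)). poly p z = 0}"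
      using assms lagrange_square_in_S_polys[of n c] poly_lagrange_other_node[of _ n c]
      by (auto simp: set_take_zeros)
    show "\<forall>p\<in>{p \<in> S_polys n. \<forall>z\<in>set (take c (zeros n)). poly p z = 0}. ratio w ?l \<le> ratio w p"
      using assms ratio_lagrange_square[of n c] node_le_ratio[of n c]
      by (auto simp: set_take_zeros)
  qed
  then show ?thesis
    using Inf_eq_is_min ratio_lagrange_square[of n c] assms by simp
qed

end

theorem lemma3p4:
  fixes w :: "real \<Rightarrow> real" and n i :: nat
  assumes "weight_function w" and "1 \<le> n" and "1 \<le> i" and "i \<le> n"
  shows "(\<forall>zs\<in>admissible_nodes i. \<exists>m. is_min (ratio_values w n zs) m)
       \<and> is_max ((\<lambda>zs. Inf (ratio_values w n zs)) ` admissible_nodes i) (xi w n i)"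
proof -
  interpret weight w using assms(1) by (rule weight.intro)
  define c where "c = i - 1"
  have c: "c < n" "i = Suc c" using assms(3,4) unfolding c_def by auto
  have xi: "xi w n i = node n c" unfolding xi_eq_node c_def ..
  show ?thesis
    unfolding xi unfolding c(2) is_max_def
    using ratio_values_has_min[OF c(1)] Inf_ratio_values_le_node[OF c(1)]
      take_zeros_admissible[OF c(1)] Inf_ratio_values_take_zeros[OF c(1)]
    by (auto intro!: rev_image_eqI[of "take c (zeros n)"])
qed

end
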